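(* Let $R$ be an associative ring with identity, and let $a,b,c,d\in R$ satisfy $bdb=bac$ and $dbd=acd$. If $ac\in R^{D}$, then $bd\in R^{D}$, $(bd)^{D}=b\big((ac)^{D}\big)^2d$, and $i(bd)\le i(ac)+1$.
   Context: For $x\in R$, $\mathrm{comm}(x)=\{y\in R : xy=yx\}$ and $\mathrm{comm}^2(x)=\{y\in R : yz=zy \text{ for all } z\in\mathrm{comm}(x)\}$. An element $x\in R$ has a Drazin inverse if there is $y\in R$ with $y=yxy$, $y\in\mathrm{comm}^2(x)$ and $x-x^2y$ nilpotent; such $y$ is unique and denoted $x^D$; $R^D$ is the set of such $x$. The (Drazin) index $i(x)$ is the smallest $k\ge 0$ with $x^k=x^{k+1}x^D$. *)

theory Defs
  imports Main
begin

definition comm :: "'a::ring_1 \<Rightarrow> 'a set" where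
  "comm x = {y. x * y = y * x}"

definition comm2 :: "'a::ring_1 \<Rightarrow> 'a set" where
  "comm2 x = {y. \<forall>z\<in>comm x. y * z = z * y}"

definition is_drazin_inv :: "'a::ring_1 \<Rightarrow> 'a \<Rightarrow> bool" where
  "is_drazin_inv x y \<longleftrightarrow> y = y * x * y \<and> y \<in> comm2 x \<and> (\<exists>n. (x - x^2 * y) ^ n = 0)"

definition drazin_set :: "'a::ring_1 set" where
  "drazin_set = {x. \<exists>y. is_drazin_inv x y}"

definition drazin :: "'a::ring_1 \<Rightarrow> 'a" where
  "drazin x = (THE y. is_drazin_inv x y)"

definition drazin_index :: "'a::ring_1 \<Rightarrow> nat" where
  "drazin_index x = (LEAST k. x ^ k = x ^ (k + 1) * drazin x)"

end

theory Submission
  imports Defs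
begin

text \<open>
  Put x = ac. The hypotheses say bdb = bx and dbd = xd; hence x commutes with db and
  (bd)^(n+1) = b x^n d. Conjugating through these identities, w = b (x^D)^2 d inherits from
  x^D the identities yw = wy, wyw = w and y^(k+1) = y^(k+2) w for y = bd and k = i(x).
  Conversely these three identities characterise a Drazin inverse: the double commutant
  condition holds because the idempotent wy = w^m y^m = y^m w^m commutes with everything
  that commutes with y.
\<close>

lemma drazin_inv_commute:
  fixes x y :: "'a::ring_1"
  assumes "is_drazin_inv x y"
  shows "x * y = y * x"
  using assms unfolding is_drazin_inv_def comm2_def comm_def by auto

lemma drazin_inv_absorb:
  fixes x y :: "'a::ring_1"
  assumes "is_drazin_inv x y"
  shows "y * x * y = y"
  using assms unfolding is_drazin_inv_def by simp

lemma power_Suc_mult_shift: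
  fixes x w :: "'a::ring_1"
  assumes "x ^ k = x ^ Suc k * w"
  shows "x ^ (k + j) = x ^ Suc (k + j) * w"
proof (induction j)
  case 0
  show ?case using assms by simp
next
  case (Suc j)
  have "x ^ (k + Suc j) = x * x ^ (k + j)" by simp
  also have "\<dots> = x * x ^ Suc (k + j) * w" using Suc by (simp add: mult.assoc)
  finally show ?case by simp
qed

lemma power_diff_power2_mult:
  fixes y w :: "'a::ring_1"
  assumes comm: "y * w = w * y" and inv: "w * y * w = w"
  shows "(y - y^2 * w) ^ Suc n = y ^ Suc n - y ^ Suc (Suc n) * w"
proof (induction n)
  case 0
  show ?case by (simp add: power2_eq_square)
next
  case (Suc n)
  have idem: "w * (y * (y * w)) = y * w"
    by (metis comm inv mult.assoc)
  have "(y - y^2 * w) ^ Suc (Suc n) = (y ^ Suc n - y ^ Suc (Suc n) * w) * (y - y^2 * w)"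
    using Suc by (simp only: power_Suc2[of _ "Suc n"])
  also have "\<dots> = y ^ Suc n * y - y ^ Suc n * (y * (y * w)) - y ^ Suc (Suc n) * (w * y)
      + y ^ Suc (Suc n) * (w * (y * (y * w)))"
    by (simp add: algebra_simps power2_eq_square)
  also have "\<dots> = y ^ Suc n * y - y ^ Suc n * (y * (y * w))"
    unfolding idem comm[symmetric] by simp
  also have "\<dots> = y ^ Suc (Suc n) - y ^ Suc (Suc (Suc n)) * w"
    by (simp only: power_Suc2 mult.assoc)
  finally show ?case .
qed

lemma drazin_inv_power_eq:
  fixes x y :: "'a::ring_1"
  assumes "is_drazin_inv x y"
  shows "\<exists>k. x ^ k = x ^ Suc k * y"
proof -
  from assms obtain n where "(x - x^2 * y) ^ n = 0"
    unfolding is_drazin_inv_def by auto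
  then have "(x - x^2 * y) ^ Suc n = 0" by simp
  then have "x ^ Suc n - x ^ Suc (Suc n) * y = 0"
    by (simp only: power_diff_power2_mult[OF drazin_inv_commute[OF assms]
          drazin_inv_absorb[OF assms]])
  then show ?thesis by (metis right_minus_eq)
qed

lemma commuting_inverse_eq_power_mult:
  fixes y w :: "'a::ring_1"
  assumes comm: "y * w = w * y" and inv: "w * y * w = w"
  shows "w = w ^ Suc n * y ^ n"
proof (induction n)
  case 0
  show ?case by simp
next
  case (Suc n)
  have "w ^ Suc (Suc n) * y ^ Suc n = w * (w ^ Suc n * y ^ n) * y"
    by (simp only: power_Suc[of w "Suc n"] power_Suc2[of y n] mult.assoc)
  also have "\<dots> = w * w * y" using Suc by simp
  also have "\<dots> = w" using comm inv by (metis mult.assoc)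
  finally show ?case by simp
qed

lemma commuting_inverse_idempotent_commute:
  fixes y w t :: "'a::ring_1"
  assumes comm: "y * w = w * y" and inv: "w * y * w = w"
    and pow: "y ^ k = y ^ Suc k * w" and yt: "y * t = t * y"
  shows "w * y * t = t * (w * y)"
proof -
  define m where "m = Suc k"
  define e where "e = w * y"
  have ym: "y ^ m = y ^ Suc m * w"
    unfolding m_def using power_Suc_mult_shift[OF pow, of 1] by simp
  have e_wy: "e = w ^ m * y ^ m"
    using commuting_inverse_eq_power_mult[OF comm inv, of k]
    unfolding e_def m_def by (metis mult.assoc power_Suc2)
  have "w ^ m * y = y * w ^ m"
    using power_commuting_commutes[of w y m] comm by simp
  then have e_yw: "e = y ^ m * w ^ m"
    using e_wy power_commuting_commutes by metis
  have tym: "y ^ m * t = t * y ^ m" using power_commuting_commutes[OF yt] .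
  have e_ym: "e * y ^ m = y ^ m"
    unfolding e_def
    by (metis comm mult.assoc power_Suc power_commuting_commutes ym)
  have ym_e: "y ^ m * e = y ^ m"
    unfolding e_def by (metis comm mult.assoc power_Suc2 ym)
  have "e * t * e = t * e"
    using e_ym tym unfolding e_yw by (metis mult.assoc)
  moreover have "e * t * e = e * t"
    using ym_e tym unfolding e_wy by (metis mult.assoc)
  ultimately show ?thesis unfolding e_def by simp
qed

lemma commuting_inverse_in_comm2:
  fixes y w :: "'a::ring_1"
  assumes comm: "y * w = w * y" and inv: "w * y * w = w" and pow: "y ^ k = y ^ Suc k * w"
  shows "w \<in> comm2 y"
  unfolding comm2_def comm_def
proof (intro CollectI ballI)
  fix t
  assume "t \<in> {t. y * t = t * y}"
  then have yt: "y * t = t * y" by simp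
  have et: "w * y * t = t * (w * y)"
    using commuting_inverse_idempotent_commute[OF comm inv pow yt] .
  have "w * t = w * (w * y) * t" using comm inv by (metis mult.assoc)
  also have "\<dots> = w * t * (w * y)" using et by (simp add: mult.assoc)
  also have "\<dots> = w * y * t * w" using yt comm by (metis mult.assoc)
  also have "\<dots> = t * w" using et inv by (metis mult.assoc)
  finally show "w * t = t * w" .
qed

lemma is_drazin_invI:
  fixes y w :: "'a::ring_1"
  assumes comm: "y * w = w * y" and inv: "w * y * w = w" and pow: "y ^ k = y ^ Suc k * w"
  shows "is_drazin_inv y w"
proof -
  have "y ^ Suc k = y ^ Suc (Suc k) * w"
    using power_Suc_mult_shift[OF pow, of 1] by simp
  then have "(y - y^2 * w) ^ Suc k = 0"
    by (simp only: power_diff_power2_mult[OF comm inv] right_minus_eq)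
  then show ?thesis
    unfolding is_drazin_inv_def
    using inv commuting_inverse_in_comm2[OF comm inv pow] by metis
qed

lemma drazin_inv_left_absorb:
  fixes x y z :: "'a::ring_1"
  assumes "is_drazin_inv x y" and pow: "x ^ k = x ^ Suc k * z"
  shows "y = y * x * z"
proof -
  have y_pow: "y ^ Suc k * x ^ k = y"
    using commuting_inverse_eq_power_mult[OF drazin_inv_commute[OF assms(1)]
        drazin_inv_absorb[OF assms(1)], of k] by simp
  have "y = y ^ Suc k * x ^ k" using y_pow by simp
  also have "\<dots> = y ^ Suc k * (x ^ k * x * z)"
    using pow by (simp only: power_Suc2)
  also have "\<dots> = y * x * z" using y_pow by (simp only: mult.assoc[symmetric])
  finally show ?thesis .
qed

lemma drazin_inv_unique:
  fixes x y z :: "'a::ring_1"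
  assumes y: "is_drazin_inv x y" and z: "is_drazin_inv x z"
  shows "y = z"
proof -
  obtain k where "x ^ k = x ^ Suc k * z" using drazin_inv_power_eq[OF z] by blast
  then have yz: "y = y * x * z" using drazin_inv_left_absorb[OF y] by blast
  obtain l where "x ^ l = x ^ Suc l * y" using drazin_inv_power_eq[OF y] by blast
  then have zy: "z = z * x * y" using drazin_inv_left_absorb[OF z] by blast
  have "z \<in> comm x" using drazin_inv_commute[OF z] unfolding comm_def by simp
  then have "y * z = z * y" using y unfolding is_drazin_inv_def comm2_def by auto
  then have "y * x * z = z * x * y"
    using drazin_inv_commute[OF y] drazin_inv_commute[OF z] by (metis mult.assoc)
  then show ?thesis using yz zy by simp
qed

lemma drazin_eqI:
  fixes x y :: "'a::ring_1"
  assumes "is_drazin_inv x y"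
  shows "drazin x = y"
  unfolding drazin_def using assms drazin_inv_unique by blast

lemma is_drazin_inv_drazin:
  fixes x :: "'a::ring_1"
  assumes "x \<in> drazin_set"
  shows "is_drazin_inv x (drazin x)"
  using assms drazin_eqI unfolding drazin_set_def by auto

lemma drazin_index_power_eq:
  fixes x :: "'a::ring_1"
  assumes "x \<in> drazin_set"
  shows "x ^ drazin_index x = x ^ (drazin_index x + 1) * drazin x"
  unfolding drazin_index_def
  by (rule LeastI_ex) (use drazin_inv_power_eq[OF is_drazin_inv_drazin[OF assms]] in simp)

lemma drazin_index_le:
  fixes x y :: "'a::ring_1"
  assumes "is_drazin_inv x y" and "x ^ k = x ^ Suc k * y"
  shows "drazin_index x \<le> k"
  unfolding drazin_index_def drazin_eqI[OF assms(1)]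
  by (rule Least_le) (use assms(2) in simp)

lemma power_Suc_mult_eq:
  fixes b d x :: "'a::ring_1"
  assumes dbd: "d * b * d = x * d"
  shows "(b * d) ^ Suc n = b * x ^ n * d"
proof (induction n)
  case 0
  show ?case by simp
next
  case (Suc n)
  have "(b * d) ^ Suc (Suc n) = b * x ^ n * (d * b * d)"
    using Suc by (simp only: power_Suc2[of _ "Suc n"] mult.assoc)
  also have "\<dots> = b * x ^ Suc n * d"
    unfolding dbd by (simp only: mult.assoc power_Suc2)
  finally show ?case .
qed

lemma drazin_inv_mult_conj:
  fixes b d x z :: "'a::ring_1"
  assumes bdb: "b * d * b = b * x" and dbd: "d * b * d = x * d"
    and drazin: "is_drazin_inv x z" and pow: "x ^ k = x ^ Suc k * z"
  shows "is_drazin_inv (b * d) (b * z^2 * d)"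
    and "(b * d) ^ Suc k = (b * d) ^ Suc (Suc k) * (b * z^2 * d)"
proof -
  have bdb_assoc: "\<And>t. b * (d * (b * t)) = b * (x * t)"
    using bdb by (metis mult.assoc)
  have dbd_assoc: "d * (b * d) = x * d"
    using dbd by (metis mult.assoc)
  have "x * (d * b) = d * b * d * b" using dbd by (metis mult.assoc)
  also have "\<dots> = d * b * x" using bdb by (metis mult.assoc)
  finally have x_db1: "x * (d * b) = d * b * x" .
  then have "x ^ n * (d * b) = d * b * x ^ n" for n
    by (rule power_commuting_commutes)
  then have x_db: "\<And>t n. x ^ n * (d * (b * t)) = d * (b * (x ^ n * t))"
    by (metis mult.assoc)
  have "d * b \<in> comm x" using x_db1 unfolding comm_def by simp
  then have "z * (d * b) = d * b * z" using drazin unfolding is_drazin_inv_def comm2_def by auto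
  then have z_db: "\<And>t. z * (d * (b * t)) = d * (b * (z * t))" by (metis mult.assoc)
  have inv: "z * x * z = z" and comm: "x * z = z * x"
    using drazin_inv_absorb[OF drazin] drazin_inv_commute[OF drazin] by simp_all
  then have zzx: "\<And>t. z * (z * (x * t)) = z * t"
    by (metis mult.assoc)
  have xzz: "\<And>t. x * (z * (z * t)) = z * t"
    using inv comm by (metis mult.assoc)
  have xz: "\<And>t. x ^ Suc k * (z * t) = x ^ k * t" "\<And>t. x * (x ^ k * (z * t)) = x ^ k * t"
    using pow by (metis mult.assoc power_Suc)+
  have w: "b * z^2 * d = b * (z * (z * d))" by (simp add: power2_eq_square mult.assoc)
  have y_w: "b * d * (b * z^2 * d) = b * (z * d)"
    unfolding w by (simp only: mult.assoc bdb_assoc xzz)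
  have w_y: "b * z^2 * d * (b * d) = b * (z * d)"
    unfolding w by (simp only: mult.assoc dbd_assoc zzx)
  have wyw: "b * z^2 * d * (b * d) * (b * z^2 * d) = b * z^2 * d"
    unfolding w by (simp only: mult.assoc dbd_assoc zzx z_db bdb_assoc xzz)
  have "(b * d) ^ Suc (Suc k) * (b * z^2 * d) = b * (x ^ Suc k * (d * (b * (z * (z * d)))))"
    unfolding w power_Suc_mult_eq[OF dbd] by (simp only: mult.assoc)
  also have "\<dots> = b * (x ^ k * d)"
    by (simp only: x_db xz bdb_assoc)
  also have "\<dots> = (b * d) ^ Suc k"
    by (simp only: power_Suc_mult_eq[OF dbd] mult.assoc)
  finally show pow': "(b * d) ^ Suc k = (b * d) ^ Suc (Suc k) * (b * z^2 * d)" ..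
  show "is_drazin_inv (b * d) (b * z^2 * d)"
    using is_drazin_invI[OF _ wyw pow'] y_w w_y by simp
qed

theorem theorem3p4:
  fixes a b c d :: "'a::ring_1"
  assumes "b * d * b = b * a * c"
    and "d * b * d = a * c * d"
    and "a * c \<in> drazin_set"
  shows "b * d \<in> drazin_set
    \<and> drazin (b * d) = b * (drazin (a * c))^2 * d
    \<and> drazin_index (b * d) \<le> drazin_index (a * c) + 1"
proof -
  have bdb: "b * d * b = b * (a * c)" using assms(1) by (simp add: mult.assoc)
  note drazin = is_drazin_inv_drazin[OF assms(3)]
  note pow = drazin_index_power_eq[OF assms(3), unfolded Suc_eq_plus1[symmetric]]
  note conj = drazin_inv_mult_conj[OF bdb assms(2) drazin pow]
  have "b * d \<in> drazin_set" using conj(1) unfolding drazin_set_def by blast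
  moreover have "drazin (b * d) = b * (drazin (a * c))^2 * d" using drazin_eqI[OF conj(1)] .
  moreover have "drazin_index (b * d) \<le> drazin_index (a * c) + 1"
    using drazin_index_le[OF conj] by simp
  ultimately show ?thesis by blast
qed

end
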